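(* Let $\mathbf{A}\in\mathbb{R}^{M\times N}$, $\mathbf{Y}\in\mathbb{R}^{M\times L}$, and let $(\mathbf{g}(t),\mathbf{V}(t))$, $t\ge0$, evolve under the continuous gradient flow of $\mathcal{L}(\mathbf{g},\mathbf{V})=\Vert\mathbf{Y}-\mathbf{A}((\mathbf{g}^{\odot 2}\mathbf{1}_L)\odot\mathbf{V})\Vert_F^2$, and assume perfect row balancedness: $\frac12 g_i^2(t)=\sum_{j\in[L]}V_{ij}^2(t)$ for all $i\in[N]$ and all $t\ge0$. Let $\mathbf{X}(t)=(\mathbf{g}(t)^{\odot 2}\mathbf{1}_L)\odot\mathbf{V}(t)$, $\boldsymbol{\Lambda}(t)=\mathbf{A}^\top(\mathbf{Y}-\mathbf{A}\mathbf{X}(t))$ with $i$-th row $\boldsymbol{\lambda}_i(t)$, and $\hat{\mathbf{x}}_i(t)=\mathbf{X}_{i:}(t)/\Vert\mathbf{X}_{i:}(t)\Vert_2$ if $\mathbf{X}_{i:}(t)\neq\mathbf 0$, $\hat{\mathbf{x}}_i(t)=\mathbf{0}$ otherwise. Then the rate of change of the Euclidean norm of the $i$-th row of $\mathbf{X}(t)$ satisfies $$\frac{d}{dt}\Vert\mathbf{X}_{i:}(t)\Vert_2=2^{2/3}\cdot 6\,\langle\boldsymbol{\lambda}_i(t),\hat{\mathbf{x}}_i(t)\rangle\,\Vert\mathbf{X}_{i:}(t)\Vert_2^{4/3}.$$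
   Context: $\odot$ is the entrywise product and $\mathbf{1}_L$ the $1\times L$ all-ones row vector, so $X_{ij}=g_i^2V_{ij}$; $\mathbf{X}_{i:}$ is the $i$-th row. Gradient flow: $\frac{d}{dt}g_l=-\partial\mathcal{L}/\partial g_l$, $\frac{d}{dt}V_{lm}=-\partial\mathcal{L}/\partial V_{lm}$ along the curve. *)

theory Defs
  imports "HOL-Analysis.Analysis"
begin

definition Xmat :: "real^'n \<Rightarrow> real^'l^'n \<Rightarrow> real^'l^'n" where
  "Xmat g V = (\<chi> i j. (g $ i)^2 * (V $ i $ j))"

definition loss :: "real^'n^'m \<Rightarrow> real^'l^'m \<Rightarrow> real^'n \<Rightarrow> real^'l^'n \<Rightarrow> real" where
  "loss A Y g V = (\<Sum>i\<in>UNIV. \<Sum>j\<in>UNIV. ((Y - A ** Xmat g V) $ i $ j)^2)"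

definition vupd :: "real^'n \<Rightarrow> 'n \<Rightarrow> real \<Rightarrow> real^'n" where
  "vupd v k u = (\<chi> i. if i = k then u else v $ i)"

definition mupd :: "real^'l^'n \<Rightarrow> 'n \<Rightarrow> 'l \<Rightarrow> real \<Rightarrow> real^'l^'n" where
  "mupd W k m u = (\<chi> i j. if i = k \<and> j = m then u else W $ i $ j)"

definition gradient_flow ::
  "real^'n^'m \<Rightarrow> real^'l^'m \<Rightarrow> (real \<Rightarrow> real^'n) \<Rightarrow> (real \<Rightarrow> real^'l^'n) \<Rightarrow> bool" where
  "gradient_flow A Y g V \<longleftrightarrow>
     (\<forall>t\<ge>0. \<forall>l.
        ((\<lambda>s. g s $ l) has_real_derivative
            - deriv (\<lambda>u. loss A Y (vupd (g t) l u) (V t)) (g t $ l)) (at t within {0..})) \<and>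
     (\<forall>t\<ge>0. \<forall>l m.
        ((\<lambda>s. V s $ l $ m) has_real_derivative
            - deriv (\<lambda>u. loss A Y (g t) (mupd (V t) l m u)) (V t $ l $ m)) (at t within {0..}))"

definition xhat :: "real^'l \<Rightarrow> real^'l" where
  "xhat x = (if x \<noteq> 0 then x /\<^sub>R norm x else 0)"

end

theory Submission imports Defs begin

text \<open>Balancedness forces \<open>\<parallel>V\<^sub>i\<^sub>:\<parallel> = \<bar>g\<^sub>i\<bar>/\<surd>2\<close>, so the row norm
\<open>\<parallel>X\<^sub>i\<^sub>:\<parallel> = g\<^sub>i\<^sup>2 \<parallel>V\<^sub>i\<^sub>:\<parallel> = \<bar>g\<^sub>i\<bar>\<^sup>3/\<surd>2\<close> depends on the scale \<open>g\<^sub>i\<close> alone, and only the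
flow equation for \<open>g\<close> is needed. It reads \<open>g\<^sub>i' = 4 g\<^sub>i \<langle>\<lambda>\<^sub>i, V\<^sub>i\<^sub>:\<rangle>\<close>, whence
\<open>\<parallel>X\<^sub>i\<^sub>:\<parallel>' = 6\<surd>2 \<bar>g\<^sub>i\<bar>\<^sup>3 \<langle>\<lambda>\<^sub>i, V\<^sub>i\<^sub>:\<rangle>\<close>; expressing \<open>\<bar>g\<^sub>i\<bar>\<close> through \<open>\<parallel>X\<^sub>i\<^sub>:\<parallel>\<close> and
\<open>V\<^sub>i\<^sub>:\<close> as a multiple of the unit row gives the claimed rate.\<close>

lemma has_real_derivative_abs_cube:
  "((\<lambda>x::real. \<bar>x\<bar> ^ 3) has_real_derivative 3 * x * \<bar>x\<bar>) (at x)"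
proof (cases "x = 0")
  case True
  have "((\<lambda>h::real. h * \<bar>h\<bar>) \<longlongrightarrow> 0) (at 0)"
    using tendsto_mult[OF tendsto_ident_at tendsto_rabs[OF tendsto_ident_at], of 0 UNIV] by simp
  moreover have "\<forall>\<^sub>F h in at 0. h * \<bar>h\<bar> = (\<bar>0 + h\<bar> ^ 3 - \<bar>0\<bar> ^ 3) / (h::real)"
    unfolding eventually_at_filter
    by (rule always_eventually) (auto simp: power3_eq_cube abs_mult_self_eq field_simps)
  ultimately have "((\<lambda>h::real. (\<bar>0 + h\<bar> ^ 3 - \<bar>0\<bar> ^ 3) / h) \<longlongrightarrow> 0) (at 0)"
    by (rule Lim_transform_eventually)
  then show ?thesis
    using True by (simp add: DERIV_def)
next
  case False
  then consider "x > 0" | "x < 0"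
    by linarith
  then show ?thesis
  proof cases
    case 1
    have "((\<lambda>x::real. x ^ 3) has_real_derivative 3 * x * \<bar>x\<bar>) (at x)"
      using 1 by (auto intro!: derivative_eq_intros simp: power2_eq_square)
    then show ?thesis
      by (rule has_field_derivative_transform_within[where d = x])
        (use 1 in \<open>auto simp: dist_real_def\<close>)
  next
    case 2
    have "((\<lambda>x::real. - (x ^ 3)) has_real_derivative 3 * x * \<bar>x\<bar>) (at x)"
      using 2 by (auto intro!: derivative_eq_intros simp: power2_eq_square)
    then show ?thesis
      by (rule has_field_derivative_transform_within[where d = "- x"])
        (use 2 in \<open>auto simp: dist_real_def abs_if\<close>)
  qed
qed

lemma Xmat_row: "Xmat g V $ i = (g $ i)\<^sup>2 *\<^sub>R V $ i"
  by (simp add: Xmat_def vec_eq_iff)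

lemma vupd_same: "vupd v k (v $ k) = v"
  by (simp add: vupd_def vec_eq_iff)

lemma inner_transpose_mult_row:
  "(transpose A ** R) $ l \<bullet> v = (\<Sum>j\<in>UNIV. \<Sum>k\<in>UNIV. A $ k $ l * R $ k $ j * v $ j)"
  by (simp add: inner_vec_def matrix_matrix_mult_def transpose_def sum_distrib_right)

lemma has_real_derivative_loss_vupd:
  fixes A :: "real^'n^'m" and Y :: "real^'l^'m" and g :: "real^'n" and V :: "real^'l^'n"
  shows "((\<lambda>u. loss A Y (vupd g l u) V) has_real_derivative
           - 4 * u * ((transpose A ** (Y - A ** Xmat (vupd g l u) V)) $ l \<bullet> V $ l)) (at u)"
proof -
  let ?R = "\<lambda>u. Y - A ** Xmat (vupd g l u) V"
  have residual: "((\<lambda>u. ?R u $ k $ j) has_real_derivative - (A $ k $ l * (2 * u) * V $ l $ j)) (at u)"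
    for k j
  proof -
    have "(\<lambda>u. ?R u $ k $ j)
        = (\<lambda>u. Y $ k $ j - (\<Sum>p\<in>UNIV. A $ k $ p * ((if p = l then u else g $ p)\<^sup>2 * V $ p $ j)))"
      by (simp add: matrix_matrix_mult_def Xmat_def vupd_def)
    moreover have "((\<lambda>u. A $ k $ p * ((if p = l then u else g $ p)\<^sup>2 * V $ p $ j))
        has_real_derivative (if p = l then A $ k $ l * (2 * u) * V $ l $ j else 0)) (at u)" for p
      by (cases "p = l") (auto intro!: derivative_eq_intros)
    then have "((\<lambda>u. Y $ k $ j - (\<Sum>p\<in>UNIV. A $ k $ p * ((if p = l then u else g $ p)\<^sup>2 * V $ p $ j)))
        has_real_derivative 0 - (\<Sum>p\<in>UNIV. if p = l then A $ k $ l * (2 * u) * V $ l $ j else 0)) (at u)"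
      by (intro derivative_intros DERIV_sum)
    ultimately show ?thesis
      by simp
  qed
  have "((\<lambda>u. loss A Y (vupd g l u) V) has_real_derivative
          (\<Sum>k\<in>UNIV. \<Sum>j\<in>UNIV. 2 * ?R u $ k $ j * - (A $ k $ l * (2 * u) * V $ l $ j))) (at u)"
    unfolding loss_def
    by (intro DERIV_sum DERIV_cong[OF DERIV_power[OF residual]]) (simp add: algebra_simps)
  moreover have "(\<Sum>k\<in>UNIV. \<Sum>j\<in>UNIV. 2 * ?R u $ k $ j * - (A $ k $ l * (2 * u) * V $ l $ j))
      = - 4 * u * ((transpose A ** ?R u) $ l \<bullet> V $ l)"
    unfolding inner_transpose_mult_row sum_distrib_left
    by (subst sum.swap) (simp add: algebra_simps)
  ultimately show ?thesis
    by simp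
qed

lemma gradient_flow_scale_has_derivative:
  assumes "gradient_flow A Y g V" and "t \<ge> 0"
  shows "((\<lambda>s. g s $ i) has_real_derivative
           4 * g t $ i * ((transpose A ** (Y - A ** Xmat (g t) (V t))) $ i \<bullet> V t $ i))
         (at t within {0..})"
proof -
  have "((\<lambda>s. g s $ i) has_real_derivative - deriv (\<lambda>u. loss A Y (vupd (g t) i u) (V t)) (g t $ i))
      (at t within {0..})"
    using assms unfolding gradient_flow_def by blast
  moreover have "deriv (\<lambda>u. loss A Y (vupd (g t) i u) (V t)) (g t $ i)
      = - 4 * g t $ i * ((transpose A ** (Y - A ** Xmat (g t) (V t))) $ i \<bullet> V t $ i)"
    using DERIV_imp_deriv[OF has_real_derivative_loss_vupd[of A Y "g t" i "V t" "g t $ i"]]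
    unfolding vupd_same .
  ultimately show ?thesis
    by simp
qed

lemma norm_row_balanced:
  assumes "(1/2) * (g $ i)\<^sup>2 = (\<Sum>j\<in>UNIV. (V $ i $ j)\<^sup>2)"
  shows "norm (V $ i) = \<bar>g $ i\<bar> / sqrt 2"
proof -
  have "(norm (V $ i))\<^sup>2 = (\<Sum>j\<in>UNIV. (V $ i $ j)\<^sup>2)"
    unfolding power2_norm_eq_inner inner_vec_def by (simp add: power2_eq_square)
  then have "(norm (V $ i))\<^sup>2 = (g $ i)\<^sup>2 / 2"
    using assms by simp
  then have "norm (V $ i) = sqrt ((g $ i)\<^sup>2 / 2)"
    by (metis norm_ge_zero real_sqrt_abs abs_of_nonneg)
  then show ?thesis
    by (simp add: real_sqrt_divide)
qed

lemma norm_scaleR_square_balanced: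
  fixes v :: "'a::real_normed_vector"
  assumes "norm v = \<bar>G\<bar> / sqrt 2"
  shows "norm (G\<^sup>2 *\<^sub>R v) = \<bar>G\<bar> ^ 3 / sqrt 2"
  using assms by (simp add: power2_eq_square power3_eq_cube)

lemma balanced_row_rate:
  fixes v w :: "real^'l"
  assumes v: "norm v = \<bar>G\<bar> / sqrt 2"
  shows "2 powr (2/3) * 6 * (w \<bullet> xhat (G\<^sup>2 *\<^sub>R v)) * norm (G\<^sup>2 *\<^sub>R v) powr (4/3)
       = 6 * sqrt 2 * \<bar>G\<bar> ^ 3 * (w \<bullet> v)"
proof (cases "G = 0")
  case True
  then show ?thesis
    by (simp add: xhat_def)
next
  case False
  then have G: "\<bar>G\<bar> > 0"
    by simp
  have norm_x: "norm (G\<^sup>2 *\<^sub>R v) = \<bar>G\<bar> ^ 3 / sqrt 2"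
    using norm_scaleR_square_balanced[OF v] .
  have xhat_x: "xhat (G\<^sup>2 *\<^sub>R v) = (sqrt 2 / \<bar>G\<bar>) *\<^sub>R v"
  proof -
    have "G\<^sup>2 / (\<bar>G\<bar> ^ 3 / sqrt 2) = sqrt 2 / \<bar>G\<bar>"
      using G by (simp add: power2_eq_square power3_eq_cube divide_simps)
    moreover have "G\<^sup>2 *\<^sub>R v \<noteq> 0"
      using G norm_x by auto
    ultimately show ?thesis
      unfolding xhat_def norm_x by (simp add: ac_simps)
  qed
  have "(\<bar>G\<bar> ^ 3) powr (4/3) = \<bar>G\<bar> ^ 4"
  proof -
    have "(\<bar>G\<bar> ^ 3) powr (4/3) = (\<bar>G\<bar> powr 3) powr (4/3)"
      using G by (simp add: powr_realpow)
    also have "\<dots> = \<bar>G\<bar> powr 4"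
      by (simp only: powr_powr) simp
    also have "\<dots> = \<bar>G\<bar> ^ 4"
      using powr_realpow[OF G, of 4] by (simp only: of_nat_numeral)
    finally show ?thesis .
  qed
  moreover have "(sqrt 2) powr (4/3) = 2 powr (2/3)"
    by (simp add: powr_half_sqrt[symmetric] powr_powr)
  ultimately have norm_x_powr: "norm (G\<^sup>2 *\<^sub>R v) powr (4/3) = \<bar>G\<bar> ^ 4 / 2 powr (2/3)"
    unfolding norm_x powr_divide by simp
  show ?thesis
    unfolding xhat_x norm_x_powr inner_scaleR_right
    using G by (simp add: power3_eq_cube power4_eq_xxxx divide_simps)
qed

theorem lemma5p3:
  fixes A :: "real^'n^'m" and Y :: "real^'l^'m"
    and g :: "real \<Rightarrow> real^'n" and V :: "real \<Rightarrow> real^'l^'n"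
  assumes flow: "gradient_flow A Y g V"
    and balanced: "\<And>t i. t \<ge> 0 \<Longrightarrow> (1/2) * (g t $ i)^2 = (\<Sum>j\<in>UNIV. (V t $ i $ j)^2)"
    and t: "t \<ge> 0"
  shows "((\<lambda>s. norm (Xmat (g s) (V s) $ i)) has_real_derivative
           2 powr (2/3) * 6
             * (((transpose A ** (Y - A ** Xmat (g t) (V t))) $ i) \<bullet> xhat (Xmat (g t) (V t) $ i))
             * norm (Xmat (g t) (V t) $ i) powr (4/3))
         (at t within {0..})"
proof -
  let ?G = "g t $ i"
  let ?c = "(transpose A ** (Y - A ** Xmat (g t) (V t))) $ i \<bullet> V t $ i"
  have norm_row: "norm (Xmat (g s) (V s) $ i) = \<bar>g s $ i\<bar> ^ 3 / sqrt 2" if "s \<ge> 0" for s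
    unfolding Xmat_row
    by (rule norm_scaleR_square_balanced[OF norm_row_balanced[OF balanced[OF that]]])
  have "3 * ?G * \<bar>?G\<bar> * (4 * ?G * ?c) / sqrt 2 = 12 * (\<bar>?G\<bar> ^ 3 * ?c) / sqrt 2"
    by (cases "?G \<ge> 0") (simp_all add: power3_eq_cube algebra_simps)
  also have "\<dots> = 6 * sqrt 2 * \<bar>?G\<bar> ^ 3 * ?c"
    by (simp add: divide_simps)
  finally have rate: "3 * ?G * \<bar>?G\<bar> * (4 * ?G * ?c) / sqrt 2 = 6 * sqrt 2 * \<bar>?G\<bar> ^ 3 * ?c" .
  have "((\<lambda>s. \<bar>g s $ i\<bar> ^ 3 / sqrt 2) has_real_derivative
      6 * sqrt 2 * \<bar>?G\<bar> ^ 3 * ?c) (at t within {0..})"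
    using DERIV_cdivide[OF DERIV_chain2[OF has_real_derivative_abs_cube
          gradient_flow_scale_has_derivative[OF flow t, of i]], of "sqrt 2"]
    unfolding rate .
  then have "((\<lambda>s. norm (Xmat (g s) (V s) $ i)) has_real_derivative
      6 * sqrt 2 * \<bar>?G\<bar> ^ 3 * ?c) (at t within {0..})"
    by (rule has_field_derivative_transform_within[where d = 1]) (use t norm_row in auto)
  then show ?thesis
    unfolding Xmat_row balanced_row_rate[OF norm_row_balanced[OF balanced[OF t]]] .
qed

end
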